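(* Let $d\ge2$ and let $Q,Q'$ be qplexes. Then $Q$ and $Q'$ are isomorphic if and only if there is a type-preserving measurement for $Q$ whose stretched measurement matrix $R$ satisfies $Q'=RQ$.
   Context: Fix an integer $d\ge 2$. $\langle\cdot,\cdot\rangle$ is the standard inner product on $\mathbb{R}^{d^2}$, $\|\cdot\|$ the Euclidean norm. $\Delta=\{p\in\mathbb{R}^{d^2}: p(i)\ge0,\ \sum_ip(i)=1\}$; $H=\{u\in\mathbb{R}^{d^2}:\sum_i u(i)=1\}$; $c=(1/d^2,\dots,1/d^2)$. For $A\subseteq H$ the polar is $A^*=\{u\in H:\langle u,v\rangle\ge\frac{1}{d(d+1)}\ \forall v\in A\}$. Out-ball $B_{\rm o}=\{u\in H:\|u-c\|\le r_{\rm o}\}$, $r_{\rm o}^2=\frac{d-1}{d^2(d+1)}$. A qplex is a set $Q\subseteq\Delta\cap B_{\rm o}$ with $Q^*=Q$. Two qplexes $Q,Q'$ are isomorphic if there is a linear bijection $f:\mathbb{R}^{d^2}\to\mathbb{R}^{d^2}$ with $f(Q)=Q'$ and $\langle f(q_1),f(q_2)\rangle=\langle q_1,q_2\rangle$ for all $q_1,q_2\in Q$. A measurement (with $d^2$ outcomes) is an array of reals $r(i|j)\ge0$ with $\sum_i r(i|j)=1$ for every $j$. For $q\in Q$, $q_r(i)=\sum_j\big[(d+1)q(j)-\frac1d\big]r(i|j)$ and $Q_r=\{q_r:q\in Q\}$; the measurement is type-preserving for $Q$ if $Q_r$ is a qplex. Its stretched measurement matrix is $R_{ij}=(d+1)r(i|j)-\frac1d\sum_k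 r(i|k)$, so that $q_r=Rq$. *)

theory Defs
  imports "HOL-Analysis.Analysis"
begin

text \<open>Vectors of R^(d^2) are modelled as real^'n with CARD('n) = d^2.\<close>

definition prob_simplex :: "(real^'n::finite) set" where
  "prob_simplex = {p. (\<forall>i. p$i \<ge> 0) \<and> (\<Sum>i\<in>UNIV. p$i) = 1}"

definition unit_sum_hyperplane :: "(real^'n::finite) set" where
  "unit_sum_hyperplane = {u. (\<Sum>i\<in>UNIV. u$i) = 1}"

definition centre :: "nat \<Rightarrow> real^'n::finite" where
  "centre d = (\<chi> i. 1 / (real d)^2)"

definition polar :: "nat \<Rightarrow> (real^'n::finite) set \<Rightarrow> (real^'n) set" where
  "polar d A = {u \<in> unit_sum_hyperplane. \<forall>v\<in>A. inner u v \<ge> 1 / (real d * (real d + 1))}"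

definition r_out :: "nat \<Rightarrow> real" where
  "r_out d = sqrt ((real d - 1) / ((real d)^2 * (real d + 1)))"

definition out_ball :: "nat \<Rightarrow> (real^'n::finite) set" where
  "out_ball d = {u \<in> unit_sum_hyperplane. norm (u - centre d) \<le> r_out d}"

definition qplex :: "nat \<Rightarrow> (real^'n::finite) set \<Rightarrow> bool" where
  "qplex d Q \<longleftrightarrow> Q \<subseteq> prob_simplex \<inter> out_ball d \<and> polar d Q = Q"

definition qplex_isomorphic :: "(real^'n::finite) set \<Rightarrow> (real^'n) set \<Rightarrow> bool" where
  "qplex_isomorphic Q Q' \<longleftrightarrow>
     (\<exists>f :: real^'n \<Rightarrow> real^'n. linear f \<and> bij f \<and> f ` Q = Q' \<and>
        (\<forall>q1\<in>Q. \<forall>q2\<in>Q. inner (f q1) (f q2) = inner q1 q2))"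

text \<open>A measurement: r i j stands for r(i|j).\<close>
definition measurement :: "('n::finite \<Rightarrow> 'n \<Rightarrow> real) \<Rightarrow> bool" where
  "measurement r \<longleftrightarrow> (\<forall>i j. r i j \<ge> 0) \<and> (\<forall>j. (\<Sum>i\<in>UNIV. r i j) = 1)"

definition meas_apply :: "nat \<Rightarrow> ('n::finite \<Rightarrow> 'n \<Rightarrow> real) \<Rightarrow> real^'n \<Rightarrow> real^'n" where
  "meas_apply d r q = (\<chi> i. \<Sum>j\<in>UNIV. ((real d + 1) * q$j - 1 / real d) * r i j)"

definition type_preserving :: "nat \<Rightarrow> (real^'n::finite) set \<Rightarrow> ('n::finite \<Rightarrow> 'n \<Rightarrow> real) \<Rightarrow> bool" where
  "type_preserving d Q r \<longleftrightarrow> qplex d (meas_apply d r ` Q)"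

definition stretched_matrix :: "nat \<Rightarrow> ('n::finite \<Rightarrow> 'n \<Rightarrow> real) \<Rightarrow> real^'n^'n" where
  "stretched_matrix d r = (\<chi> i j. (real d + 1) * r i j - (1 / real d) * (\<Sum>k\<in>UNIV. r i k))"

end

theory Submission
  imports Defs
begin

text \<open>
  A qplex Q contains the basis states u_j = (e_j + 1/d)/(d+1), since these lie in the polar of
  every subset of the simplex, and two points of Q have inner product at most 2/(d(d+1)), with
  equality only for equal points.

  If Q' = R Q for a measurement r, the nonnegativity of R q puts every rescaled likelihood
  vector r(i|-)/t_i, with t_i the i-th row sum, into Q^* = Q.  Pairing it with a preimage of u_i
  gives t_i \<ge> 1, and as the t_i add up to d^2 they all equal 1.  Then the likelihood vectors are
  themselves the preimages of the u_i, which forces R R^T = I.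

  Conversely, an isomorphism f preserves inner products of the u_j, hence fixes their sum, the
  all-ones vector; so the matrix F of f has unit row and column sums and r = (F + 1/d)/(d+1) is
  a measurement with stretched matrix F, whose nonnegativity is again the polar argument.
\<close>

lemma inner_one_right: "(x::real^'n::finite) \<bullet> 1 = (\<Sum>i\<in>UNIV. x$i)"
  by (simp add: inner_vec_def)

lemma qplex_nonneg: "qplex d Q \<Longrightarrow> q \<in> Q \<Longrightarrow> 0 \<le> q$i"
  unfolding qplex_def prob_simplex_def by auto

lemma qplex_sum_eq_1: "qplex d Q \<Longrightarrow> q \<in> Q \<Longrightarrow> (\<Sum>i\<in>UNIV. q$i) = 1"
  unfolding qplex_def prob_simplex_def by auto

lemma qplex_memI:
  assumes "qplex d Q" and "(\<Sum>i\<in>UNIV. u$i) = 1"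
    and "\<And>v. v \<in> Q \<Longrightarrow> 1 / (real d * (real d + 1)) \<le> u \<bullet> v"
  shows "u \<in> Q"
  using assms unfolding qplex_def polar_def unit_sum_hyperplane_def by blast

lemma qplex_inner_self_le:
  fixes Q :: "(real^'n::finite) set"
  assumes "d > 0" and "CARD('n) = d^2" and "qplex d Q" and "x \<in> Q"
  shows "x \<bullet> x \<le> 2 / (real d * (real d + 1))"
proof -
  let ?c = "centre d :: real^'n"
  have "norm (x - ?c) \<le> r_out d"
    using assms(3,4) unfolding qplex_def out_ball_def by auto
  then have "(norm (x - ?c))^2 \<le> (r_out d)^2"
    by (simp add: power_mono)
  then have "(x - ?c) \<bullet> (x - ?c) \<le> (real d - 1) / ((real d)^2 * (real d + 1))"
    using \<open>d > 0\<close> by (simp add: power2_norm_eq_inner r_out_def)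
  moreover have "x \<bullet> ?c = 1 / (real d)^2" and "?c \<bullet> ?c = 1 / (real d)^2"
    using qplex_sum_eq_1[OF assms(3,4)] assms(1,2)
    by (simp_all add: inner_vec_def centre_def sum_divide_distrib[symmetric] power2_eq_square)
  moreover have "(x - ?c) \<bullet> (x - ?c) = x \<bullet> x - 2 * (x \<bullet> ?c) + ?c \<bullet> ?c"
    by (simp add: inner_diff_left inner_diff_right inner_commute)
  ultimately have "x \<bullet> x \<le> (real d - 1) / ((real d)^2 * (real d + 1)) + 1 / (real d)^2"
    by simp
  also have "\<dots> = 2 / (real d * (real d + 1))"
    using \<open>d > 0\<close> by (simp add: divide_simps power2_eq_square)
  finally show ?thesis .
qed

lemma qplex_inner_le:
  fixes Q :: "(real^'n::finite) set"
  assumes "d > 0" and "CARD('n) = d^2" and "qplex d Q" and "x \<in> Q" and "y \<in> Q"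
  shows "x \<bullet> y \<le> 2 / (real d * (real d + 1))"
proof -
  have "0 \<le> (x - y) \<bullet> (x - y)" by simp
  then have "2 * (x \<bullet> y) \<le> x \<bullet> x + y \<bullet> y"
    by (simp add: inner_diff_left inner_diff_right inner_commute)
  then show ?thesis
    using qplex_inner_self_le[OF assms(1-4)] qplex_inner_self_le[OF assms(1-3,5)] by linarith
qed

lemma qplex_eq_if_inner_eq_max:
  fixes Q :: "(real^'n::finite) set"
  assumes "d > 0" and "CARD('n) = d^2" and "qplex d Q" and "x \<in> Q" and "y \<in> Q"
    and "x \<bullet> y = 2 / (real d * (real d + 1))"
  shows "x = y"
proof -
  have "(x - y) \<bullet> (x - y) = x \<bullet> x + y \<bullet> y - 2 * (x \<bullet> y)"
    by (simp add: inner_diff_left inner_diff_right inner_commute)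
  also have "\<dots> \<le> 0"
    using qplex_inner_self_le[OF assms(1-4)] qplex_inner_self_le[OF assms(1-3,5)] assms(6) by simp
  finally show ?thesis
    by (metis eq_iff_diff_eq_0 inner_eq_zero_iff inner_ge_zero order_antisym)
qed

definition basis_state :: "nat \<Rightarrow> 'n \<Rightarrow> real^'n::finite" where
  "basis_state d j = (\<chi> i. ((if i = j then 1 else 0) + 1 / real d) / (real d + 1))"

lemma basis_state_nth_self: "d > 0 \<Longrightarrow> basis_state d j $ j = 1 / real d"
  unfolding basis_state_def by (simp add: divide_simps)

lemma inner_basis_state:
  "basis_state d j \<bullet> v = (v$j + (\<Sum>i\<in>UNIV. v$i) / real d) / (real d + 1)"
proof -
  have "basis_state d j \<bullet> v
      = (\<Sum>i\<in>UNIV. (if i = j then v$i else 0) + v$i / real d) / (real d + 1)"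
    unfolding basis_state_def inner_vec_def
    by (simp add: sum_divide_distrib field_simps) (auto intro: sum.cong)
  then show ?thesis by (simp add: sum.distrib sum_divide_distrib)
qed

lemma axis_eq_basis_state:
  fixes j :: "'n::finite"
  assumes "d > 0"
  shows "axis j 1 = (real d + 1) *\<^sub>R basis_state d j - (1 / real d) *\<^sub>R (1::real^'n)"
  using assms unfolding basis_state_def axis_def by (simp add: vec_eq_iff)

lemma sum_basis_state_nth:
  fixes j :: "'n::finite"
  assumes "d > 0" and "CARD('n) = d^2"
  shows "(\<Sum>i\<in>UNIV. basis_state d j $ i) = 1"
proof -
  have "(\<Sum>i\<in>UNIV. basis_state d j $ i) = basis_state d j \<bullet> (1::real^'n)"
    by (simp add: inner_one_right)
  also have "\<dots> = 1"
    using assms by (simp add: inner_basis_state divide_simps power2_eq_square)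
  finally show ?thesis .
qed

lemma sum_basis_states:
  fixes d :: nat
  assumes "d > 0" and "CARD('n::finite) = d^2"
  shows "(\<Sum>j\<in>UNIV. basis_state d j) = (1::real^'n)"
proof -
  have "(\<Sum>j\<in>UNIV. basis_state d j) $ i = (\<Sum>j\<in>UNIV. basis_state d i $ j)" for i
    unfolding basis_state_def sum_component by (auto intro: sum.cong)
  then show ?thesis
    using sum_basis_state_nth[OF assms] by (metis vec_eq_iff one_index)
qed

lemma basis_state_in_qplex:
  fixes Q :: "(real^'n::finite) set"
  assumes "d > 0" and "CARD('n) = d^2" and "qplex d Q"
  shows "basis_state d j \<in> Q"
proof (rule qplex_memI[OF assms(3) sum_basis_state_nth[OF assms(1,2)]])
  fix v assume "v \<in> Q"
  then have "0 \<le> v$j" and "(\<Sum>i\<in>UNIV. v$i) = 1"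
    using qplex_nonneg qplex_sum_eq_1 assms(3) by blast+
  then show "1 / (real d * (real d + 1)) \<le> basis_state d j \<bullet> v"
    using assms(1) by (simp add: inner_basis_state divide_simps)
qed

definition likelihood :: "('n \<Rightarrow> 'n \<Rightarrow> real) \<Rightarrow> 'n \<Rightarrow> real^'n::finite" where
  "likelihood r i = (\<chi> j. r i j)"

lemma stretched_matrix_mult_nth:
  "(stretched_matrix d r *v q) $ i
     = (real d + 1) * (likelihood r i \<bullet> q) - (\<Sum>k\<in>UNIV. r i k) * (\<Sum>j\<in>UNIV. q$j) / real d"
proof -
  define t where "t = (\<Sum>k\<in>UNIV. r i k)"
  have "(stretched_matrix d r *v q) $ i = (\<Sum>j\<in>UNIV. (real d + 1) * (r i j * q$j) - t / real d * q$j)"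
    unfolding stretched_matrix_def matrix_vector_mult_def t_def by (simp add: algebra_simps)
  also have "\<dots> = (real d + 1) * (likelihood r i \<bullet> q) - t / real d * (\<Sum>j\<in>UNIV. q$j)"
    unfolding likelihood_def inner_vec_def by (simp add: sum_subtractf sum_distrib_left)
  finally show ?thesis unfolding t_def by simp
qed

lemma meas_apply_eq_stretched_matrix_mult:
  assumes "(\<Sum>j\<in>UNIV. q$j) = 1"
  shows "meas_apply d r q = stretched_matrix d r *v q"
proof -
  have "(meas_apply d r q) $ i = (real d + 1) * (likelihood r i \<bullet> q) - (\<Sum>k\<in>UNIV. r i k) / real d" for i
    unfolding meas_apply_def likelihood_def inner_vec_def
    by (simp add: algebra_simps sum_subtractf sum_distrib_left sum_divide_distrib)
  then show ?thesis
    using assms by (simp add: vec_eq_iff stretched_matrix_mult_nth)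
qed

lemma stretched_matrix_mult_one:
  fixes r :: "'n::finite \<Rightarrow> 'n \<Rightarrow> real"
  assumes "d > 0" and "CARD('n) = d^2" and "\<And>i. (\<Sum>j\<in>UNIV. r i j) = 1"
  shows "stretched_matrix d r *v 1 = 1"
  using assms
  by (simp add: vec_eq_iff stretched_matrix_mult_nth inner_one_right likelihood_def power2_eq_square)

lemma scaled_likelihood_in_qplex:
  fixes Q :: "(real^'n::finite) set"
  assumes "d > 0" and "qplex d Q"
    and nonneg: "\<And>q. q \<in> Q \<Longrightarrow> 0 \<le> (stretched_matrix d r *v q) $ i"
    and pos: "(\<Sum>j\<in>UNIV. r i j) > 0"
  shows "(1 / (\<Sum>j\<in>UNIV. r i j)) *\<^sub>R likelihood r i \<in> Q"
proof (rule qplex_memI[OF \<open>qplex d Q\<close>])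
  let ?t = "\<Sum>j\<in>UNIV. r i j"
  show "(\<Sum>j\<in>UNIV. ((1 / ?t) *\<^sub>R likelihood r i) $ j) = 1"
    using pos by (simp add: likelihood_def sum_divide_distrib[symmetric])
  fix v assume "v \<in> Q"
  then have "0 \<le> (real d + 1) * (likelihood r i \<bullet> v) - ?t / real d"
    using nonneg[of v] qplex_sum_eq_1[OF \<open>qplex d Q\<close>] by (simp add: stretched_matrix_mult_nth)
  then have "?t \<le> (real d * (real d + 1)) * (likelihood r i \<bullet> v)"
    using \<open>d > 0\<close> by (simp add: field_simps)
  then show "1 / (real d * (real d + 1)) \<le> ((1 / ?t) *\<^sub>R likelihood r i) \<bullet> v"
    using pos \<open>d > 0\<close> by (simp add: divide_simps mult_ac)
qed

context
  fixes d :: nat and Q Q' :: "(real^'n::finite) set" and r :: "'n \<Rightarrow> 'n \<Rightarrow> real"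
  assumes d_pos: "d > 0" and card: "CARD('n) = d^2"
    and qplex_Q: "qplex d Q" and qplex_Q': "qplex d Q'"
    and meas: "measurement r" and image: "Q' = (\<lambda>q. stretched_matrix d r *v q) ` Q"
begin

lemma stretched_matrix_mult_nonneg: "q \<in> Q \<Longrightarrow> 0 \<le> (stretched_matrix d r *v q) $ i"
  using qplex_nonneg[OF qplex_Q'] image by blast

lemma basis_state_has_preimage: "\<exists>q\<in>Q. stretched_matrix d r *v q = basis_state d i"
  using basis_state_in_qplex[OF d_pos card qplex_Q'] image by (metis imageE)

lemma likelihood_inner_preimage_of_basis_state:
  assumes "q \<in> Q" and "stretched_matrix d r *v q = basis_state d i"
  shows "real d * (real d + 1) * (likelihood r i \<bullet> q) = 1 + (\<Sum>j\<in>UNIV. r i j)"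
proof -
  have "(stretched_matrix d r *v q) $ i = 1 / real d"
    using assms(2) basis_state_nth_self[OF d_pos] by simp
  then have "(real d + 1) * (likelihood r i \<bullet> q) - (\<Sum>j\<in>UNIV. r i j) / real d = 1 / real d"
    using stretched_matrix_mult_nth[of d r q i] qplex_sum_eq_1[OF qplex_Q assms(1)] by simp
  then show ?thesis
    using d_pos by (simp add: field_simps)
qed

lemma measurement_row_sum_ge_1: "1 \<le> (\<Sum>j\<in>UNIV. r i j)"
proof -
  let ?t = "\<Sum>j\<in>UNIV. r i j"
  obtain q where q: "q \<in> Q" "stretched_matrix d r *v q = basis_state d i"
    using basis_state_has_preimage by blast
  have inner_q: "real d * (real d + 1) * (likelihood r i \<bullet> q) = 1 + ?t"
    using likelihood_inner_preimage_of_basis_state[OF q] .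
  have r_nonneg: "0 \<le> r i j" for j
    using meas unfolding measurement_def by simp
  show ?thesis
  proof (cases "?t = 0")
    case True
    then have "likelihood r i = 0"
      using r_nonneg by (simp add: sum_nonneg_eq_0_iff likelihood_def vec_eq_iff)
    then show ?thesis
      using inner_q True d_pos by simp
  next
    case False
    then have pos: "?t > 0"
      using r_nonneg by (simp add: sum_nonneg order_less_le)
    have "((1 / ?t) *\<^sub>R likelihood r i) \<bullet> q \<le> 2 / (real d * (real d + 1))"
      using qplex_inner_le[OF d_pos card qplex_Q _ q(1)]
        scaled_likelihood_in_qplex[OF d_pos qplex_Q stretched_matrix_mult_nonneg pos] by blast
    then have "real d * (real d + 1) * (likelihood r i \<bullet> q) \<le> 2 * ?t"
      using pos d_pos by (simp add: divide_simps mult_ac)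
    then show ?thesis
      using inner_q by simp
  qed
qed

lemma measurement_row_sum_eq_1: "(\<Sum>j\<in>UNIV. r i j) = 1"
proof -
  have "(\<Sum>i\<in>UNIV. \<Sum>j\<in>UNIV. r i j) = real CARD('n)"
    using meas unfolding measurement_def by (subst sum.swap) simp
  then have "(\<Sum>i\<in>UNIV. (\<Sum>j\<in>UNIV. r i j) - 1) = 0"
    by (simp add: sum_subtractf)
  then show ?thesis
    using measurement_row_sum_ge_1 by (subst (asm) sum_nonneg_eq_0_iff) auto
qed

lemma likelihood_in_qplex: "likelihood r i \<in> Q"
  using scaled_likelihood_in_qplex[OF d_pos qplex_Q stretched_matrix_mult_nonneg] measurement_row_sum_eq_1 by simp

lemma stretched_matrix_mult_likelihood: "stretched_matrix d r *v likelihood r i = basis_state d i"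
proof -
  obtain q where q: "q \<in> Q" "stretched_matrix d r *v q = basis_state d i"
    using basis_state_has_preimage by blast
  have "likelihood r i \<bullet> q = 2 / (real d * (real d + 1))"
    using likelihood_inner_preimage_of_basis_state[OF q] measurement_row_sum_eq_1 d_pos
    by (simp add: eq_divide_eq mult_ac)
  then have "likelihood r i = q"
    using qplex_eq_if_inner_eq_max[OF d_pos card qplex_Q likelihood_in_qplex q(1)] by blast
  then show ?thesis
    using q(2) by simp
qed

lemma orthogonal_stretched_matrix: "orthogonal_matrix (stretched_matrix d r)"
proof -
  let ?R = "stretched_matrix d r"
  have row: "row i ?R = (real d + 1) *\<^sub>R likelihood r i - (1 / real d) *\<^sub>R 1" for i
    using measurement_row_sum_eq_1[of i] by (simp add: row_def stretched_matrix_def likelihood_def vec_eq_iff)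
  have "?R *v row i ?R = axis i 1" for i
    using stretched_matrix_mult_one[of d r, OF d_pos card measurement_row_sum_eq_1]
    by (simp add: row matrix_vector_mult_diff_distrib matrix_vector_mult_scaleR
        stretched_matrix_mult_likelihood axis_eq_basis_state[OF d_pos])
  then have "?R ** transpose ?R = mat 1"
    by (simp add: matrix_mult_transpose_dot_row matrix_mult_dot vec_eq_iff mat_def axis_def row_def)
  then show ?thesis
    by (simp add: orthogonal_matrix_def matrix_left_right_inverse)
qed

end

lemma qplex_isomorphic_if_stretched_image:
  fixes Q Q' :: "(real^'n::finite) set" and r :: "'n \<Rightarrow> 'n \<Rightarrow> real"
  assumes "d > 0" and "CARD('n) = d^2" and "qplex d Q" and "qplex d Q'"
    and "measurement r" and image: "Q' = (\<lambda>q. stretched_matrix d r *v q) ` Q"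
  shows "qplex_isomorphic Q Q'"
proof -
  have "orthogonal_transformation (\<lambda>x. stretched_matrix d r *v x)"
    using orthogonal_stretched_matrix[OF assms] by (simp add: orthogonal_transformation_matrix)
  then show ?thesis
    unfolding qplex_isomorphic_def using orthogonal_transformation_bij image
    by (intro exI[of _ "\<lambda>x. stretched_matrix d r *v x"]) (auto simp: orthogonal_transformation_def)
qed

definition measurement_of_stretched :: "nat \<Rightarrow> real^'n^'n \<Rightarrow> 'n::finite \<Rightarrow> 'n \<Rightarrow> real" where
  "measurement_of_stretched d F i j = (F$i$j + 1 / real d) / (real d + 1)"

lemma measurement_of_stretched_row_sum:
  fixes F :: "real^'n::finite^'n"
  assumes "d > 0" and "CARD('n) = d^2" and "F *v 1 = 1"
  shows "(\<Sum>j\<in>UNIV. measurement_of_stretched d F i j) = 1"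
proof -
  have "(\<Sum>j\<in>UNIV. measurement_of_stretched d F i j)
      = ((\<Sum>j\<in>UNIV. F$i$j) + real CARD('n) / real d) / (real d + 1)"
    unfolding measurement_of_stretched_def by (simp add: sum_divide_distrib[symmetric] sum.distrib)
  also have "(\<Sum>j\<in>UNIV. F$i$j) = 1"
    using assms(3) by (simp add: vec_eq_iff matrix_vector_mult_def)
  finally show ?thesis
    using assms(1,2) by (simp add: power2_eq_square)
qed

lemma measurement_of_stretched_column_sum:
  fixes F :: "real^'n::finite^'n"
  assumes "d > 0" and "CARD('n) = d^2" and "(\<Sum>i\<in>UNIV. F$i$j) = 1"
  shows "(\<Sum>i\<in>UNIV. measurement_of_stretched d F i j) = 1"
proof -
  have "(\<Sum>i\<in>UNIV. measurement_of_stretched d F i j)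
      = ((\<Sum>i\<in>UNIV. F$i$j) + real CARD('n) / real d) / (real d + 1)"
    unfolding measurement_of_stretched_def by (simp add: sum_divide_distrib[symmetric] sum.distrib)
  then show ?thesis
    using assms by (simp add: power2_eq_square)
qed

lemma stretched_matrix_measurement_of_stretched:
  fixes F :: "real^'n::finite^'n"
  assumes "d > 0" and "CARD('n) = d^2" and "F *v 1 = 1"
  shows "stretched_matrix d (measurement_of_stretched d F) = F"
  using assms measurement_of_stretched_row_sum[OF assms]
  by (simp add: stretched_matrix_def measurement_of_stretched_def vec_eq_iff)

context
  fixes d :: nat and Q Q' :: "(real^'n::finite) set" and f :: "real^'n \<Rightarrow> real^'n"
  assumes d_pos: "d > 0" and card: "CARD('n) = d^2"
    and qplex_Q: "qplex d Q" and qplex_Q': "qplex d Q'"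
    and linear: "linear f" and image: "f ` Q = Q'"
    and inner: "\<forall>x\<in>Q. \<forall>y\<in>Q. f x \<bullet> f y = x \<bullet> y"
begin

lemma sum_image_basis_state: "(\<Sum>i\<in>UNIV. f (basis_state d j) $ i) = 1"
  using basis_state_in_qplex[OF d_pos card qplex_Q] image qplex_sum_eq_1[OF qplex_Q'] by blast

lemma isomorphism_fixes_one: "f 1 = 1"
proof -
  let ?B = "\<lambda>j. basis_state d j :: real^'n"
  have f_one: "f 1 = (\<Sum>j\<in>UNIV. f (?B j))"
    using sum_basis_states[OF d_pos card] linear by (metis linear_sum)
  have "f 1 \<bullet> f 1 = (\<Sum>j\<in>UNIV. \<Sum>k\<in>UNIV. f (?B k) \<bullet> f (?B j))"
    unfolding f_one by (simp add: inner_sum_left inner_sum_right)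
  also have "\<dots> = (\<Sum>j\<in>UNIV. \<Sum>k\<in>UNIV. ?B k \<bullet> ?B j)"
    using inner basis_state_in_qplex[OF d_pos card qplex_Q] by simp
  also have "\<dots> = (\<Sum>j\<in>UNIV. ?B j) \<bullet> (\<Sum>j\<in>UNIV. ?B j)"
    by (simp add: inner_sum_left inner_sum_right)
  also have "\<dots> = 1 \<bullet> (1::real^'n)"
    by (simp only: sum_basis_states[OF d_pos card])
  finally have "f 1 \<bullet> f 1 = 1 \<bullet> (1::real^'n)" .
  moreover have "f 1 \<bullet> 1 = 1 \<bullet> (1::real^'n)"
    using sum_image_basis_state unfolding f_one inner_sum_left by (simp add: inner_one_right)
  ultimately have "(f 1 - 1) \<bullet> (f 1 - 1) = 0"
    by (simp add: inner_diff_left inner_diff_right inner_commute)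
  then show ?thesis by simp
qed

lemma isomorphism_matrix_column_sum: "(\<Sum>i\<in>UNIV. matrix f $ i $ j) = 1"
proof -
  have "(\<Sum>i\<in>UNIV. matrix f $ i $ j) = f (axis j 1) \<bullet> 1"
    by (simp add: matrix_def inner_one_right)
  also have "\<dots> = (real d + 1) * (f (basis_state d j) \<bullet> 1) - (f 1 \<bullet> 1) / real d"
    using linear by (simp add: axis_eq_basis_state[OF d_pos] linear_diff linear_scale inner_diff_left)
  also have "\<dots> = (real d + 1) - real CARD('n) / real d"
    by (simp add: sum_image_basis_state isomorphism_fixes_one inner_one_right)
  also have "\<dots> = 1"
    using d_pos card by (simp add: power2_eq_square)
  finally show ?thesis .
qed

lemma type_preserving_measurement_of_isomorphism:
  "\<exists>r. measurement r \<and> type_preserving d Q r \<and> Q' = (\<lambda>q. stretched_matrix d r *v q) ` Q"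
proof -
  let ?r = "measurement_of_stretched d (matrix f)"
  have mult: "matrix f *v x = f x" for x
    using linear by (simp add: matrix_works)
  have stretched: "stretched_matrix d ?r = matrix f"
    using stretched_matrix_measurement_of_stretched[OF d_pos card] mult isomorphism_fixes_one by simp
  have image': "Q' = (\<lambda>q. stretched_matrix d ?r *v q) ` Q"
    unfolding stretched mult using image by simp
  have row_sum: "(\<Sum>j\<in>UNIV. ?r i j) = 1" for i
    using measurement_of_stretched_row_sum[OF d_pos card] mult isomorphism_fixes_one by simp
  have "likelihood ?r i \<in> Q" for i
    using scaled_likelihood_in_qplex[OF d_pos qplex_Q, of ?r i] row_sum image' qplex_nonneg[OF qplex_Q']
    by auto
  then have "0 \<le> ?r i j" for i j
    using qplex_nonneg[OF qplex_Q] by (metis likelihood_def vec_lambda_beta)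
  then have "measurement ?r"
    unfolding measurement_def
    using measurement_of_stretched_column_sum[OF d_pos card isomorphism_matrix_column_sum] by simp
  moreover have "type_preserving d Q ?r"
    unfolding type_preserving_def
    using meas_apply_eq_stretched_matrix_mult qplex_sum_eq_1[OF qplex_Q] image' qplex_Q'
    by (metis (no_types, lifting) image_cong)
  ultimately show ?thesis
    using image' by blast
qed

end

theorem mainTheorem12:
  fixes d :: nat and Q Q' :: "(real^'n) set"
  assumes "d \<ge> 2" and "CARD('n) = d^2"
    and "qplex d Q" and "qplex d Q'"
  shows "qplex_isomorphic Q Q' \<longleftrightarrow>
    (\<exists>r :: 'n \<Rightarrow> 'n \<Rightarrow> real. measurement r \<and> type_preserving d Q r \<and>
        Q' = (\<lambda>q. stretched_matrix d r *v q) ` Q)"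
proof -
  have "d > 0" using \<open>d \<ge> 2\<close> by simp
  show ?thesis
    using type_preserving_measurement_of_isomorphism[OF \<open>d > 0\<close> assms(2-4)]
      qplex_isomorphic_if_stretched_image[OF \<open>d > 0\<close> assms(2-4)]
    unfolding qplex_isomorphic_def by blast
qed

end
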